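(* Let $p\ge 2$, let $s\in\mathbb{R}^n$ be nonzero and let $\mathcal{R}\in\mathbb{R}^{\otimes^{p-1} n}_{\mathrm{sym}}$. Then the problem of minimizing $\|\mathcal{U}\|_F$ over $\mathcal{U}\in\mathbb{R}^{\otimes^p n}_{\mathrm{sym}}$ subject to $\mathcal{U}[s]=\mathcal{R}$ has a unique solution, and this solution is the unique $\mathcal{U}\in\mathbb{R}^{\otimes^p n}_{\mathrm{sym}}$ satisfying both $\mathcal{U}[s]=\mathcal{R}$ and $\mathcal{U}[u_1,\dots,u_p]=0$ whenever all of $u_1,\dots,u_p\in\mathbb{R}^n$ are orthogonal to $s$.
   Context: A $p$-tensor $\mathcal{T} \in \mathbb{R}^{\otimes^p n}$ is a multilinear map $(\mathbb{R}^n)^p \to \mathbb{R}$; $\mathcal{T}[s]$ denotes the $(p-1)$-tensor obtained by fixing the first argument to $s$. $\mathcal{T}$ is symmetric if it is invariant under all permutations of its arguments; $\mathbb{R}^{\otimes^p n}_{\mathrm{sym}}$ is the space of symmetric $p$-tensors. $\|\cdot\|_F$ is the Frobenius norm of the array of entries $\mathcal{T}[e_{i_1},\dots,e_{i_p}]$. *)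

theory Defs
  imports "HOL-Analysis.Analysis"
begin

text \<open>Tensors over R^n, with n = CARD('n) given by a finite index type.
A p-tensor is represented by its array of entries, a function on index lists
of length p (entries T[e_i1,...,e_ip]); it is required to vanish on index
lists of any other length so that tensors are determined by their entries.\<close>

type_synonym 'n tensor = "'n list \<Rightarrow> real"

definition idx :: "nat \<Rightarrow> 'n list set" where
  "idx p = {xs. length xs = p}"

definition is_tensor :: "nat \<Rightarrow> 'n tensor \<Rightarrow> bool" where
  "is_tensor p T \<longleftrightarrow> (\<forall>xs. length xs \<noteq> p \<longrightarrow> T xs = 0)"

definition sym_tensor :: "nat \<Rightarrow> 'n tensor \<Rightarrow> bool" where
  "sym_tensor p T \<longleftrightarrow> is_tensor p T \<and>
     (\<forall>xs ys. length xs = p \<longrightarrow> mset xs = mset ys \<longrightarrow> T xs = T ys)"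

definition tensor_eval :: "nat \<Rightarrow> ('n::finite) tensor \<Rightarrow> (nat \<Rightarrow> real^'n) \<Rightarrow> real" where
  "tensor_eval p T u = (\<Sum>xs\<in>idx p. T xs * (\<Prod>k<p. u k $ (xs ! k)))"

definition tensor_apply :: "nat \<Rightarrow> ('n::finite) tensor \<Rightarrow> real^'n \<Rightarrow> 'n tensor" where
  "tensor_apply p T s = (\<lambda>xs. if length xs = p - 1 then (\<Sum>i\<in>UNIV. s $ i * T (i # xs)) else 0)"

definition frob_norm :: "nat \<Rightarrow> ('n::finite) tensor \<Rightarrow> real" where
  "frob_norm p T = sqrt (\<Sum>xs\<in>idx p. (T xs)\<^sup>2)"

end

theory Submission
  imports Defs
begin

text \<open>Write \<open>P\<close> for the orthogonal projection onto \<open>s\<^sup>\<perp>\<close>. If \<open>D\<close> is symmetric with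
\<open>D[s] = 0\<close>, then \<open>D(u\<^sub>1,\<dots>,u\<^sub>p) = D(Pu\<^sub>1,\<dots>,Pu\<^sub>p)\<close>, since by symmetry every slot of \<open>D\<close>
kills \<open>s\<close>. Hence the feasible set \<open>{U. U[s] = R}\<close> is an affine space whose direction is
Frobenius-orthogonal to every tensor vanishing on \<open>(s\<^sup>\<perp>)\<^sup>p\<close>, and a symmetric tensor vanishing
on \<open>(s\<^sup>\<perp>)\<^sup>p\<close> that lies in the direction is zero. A feasible \<open>U\<^sub>0\<close> exists (solve \<open>U[s] = R\<close>
recursively on the multiplicity of an index \<open>i\<^sub>0\<close> with \<open>s\<^sub>i\<^sub>0 \<noteq> 0\<close>); subtracting from it its
compression \<open>U\<^sub>0(P\<cdot>,\<dots>,P\<cdot>)\<close> gives the feasible tensor vanishing on \<open>(s\<^sup>\<perp>)\<^sup>p\<close>, and by Pythagoras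
it is the unique norm minimiser.\<close>

lemma finite_idx: "finite (idx p :: ('n::finite) list set)"
proof -
  have "idx p = {xs::'n list. set xs \<subseteq> UNIV \<and> length xs = p}" by (auto simp: idx_def)
  thus ?thesis using finite_lists_length_eq[of "UNIV::'n set" p] by simp
qed

lemma sum_idx_Suc:
  "(\<Sum>xs\<in>idx (Suc m). F xs) = (\<Sum>a\<in>UNIV. \<Sum>ys\<in>idx m. F (a # ys))"
proof -
  have idx: "idx (Suc m) = (\<lambda>(a,ys). a#ys) ` (UNIV \<times> idx m)"
    by (auto simp: idx_def length_Suc_conv image_iff)
  have inj: "inj_on (\<lambda>(a,ys). a#ys) (UNIV \<times> idx m)" by (auto simp: inj_on_def)
  show ?thesis unfolding idx sum.reindex[OF inj] sum.cartesian_product by (simp add: case_prod_beta)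
qed

lemma sum_idx_prod:
  fixes f :: "nat \<Rightarrow> 'n::finite \<Rightarrow> real"
  shows "(\<Sum>xs\<in>idx p. \<Prod>k<p. f k (xs ! k)) = (\<Prod>k<p. \<Sum>a\<in>UNIV. f k a)"
proof (induction p arbitrary: f)
  case 0
  have "idx 0 = {[]::'n list}" by (auto simp: idx_def)
  thus ?case by simp
next
  case (Suc p)
  have "(\<Sum>xs\<in>idx (Suc p). \<Prod>k<Suc p. f k (xs ! k))
     = (\<Sum>a\<in>UNIV. \<Sum>ys\<in>idx p. f 0 a * (\<Prod>k<p. f (Suc k) (ys ! k)))"
    unfolding sum_idx_Suc prod.lessThan_Suc_shift by simp
  also have "\<dots> = (\<Sum>a\<in>UNIV. f 0 a * (\<Prod>k<p. \<Sum>b\<in>UNIV. f (Suc k) b))"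
    by (simp add: Suc.IH[of "\<lambda>k. f (Suc k)", symmetric] sum_distrib_left)
  also have "\<dots> = (\<Prod>k<Suc p. \<Sum>a\<in>UNIV. f k a)"
    unfolding prod.lessThan_Suc_shift by (simp add: sum_distrib_right)
  finally show ?case .
qed

lemma tensor_eqI:
  assumes "is_tensor p A" "is_tensor p B" "\<And>xs. xs \<in> idx p \<Longrightarrow> A xs = B xs"
  shows "A = B"
proof
  fix xs
  show "A xs = B xs"
    using assms by (cases "length xs = p") (auto simp: is_tensor_def idx_def)
qed

lemma sym_tensor_diff:
  "sym_tensor p A \<Longrightarrow> sym_tensor p B \<Longrightarrow> sym_tensor p (\<lambda>xs. A xs - B xs)"
  unfolding sym_tensor_def is_tensor_def by simp

lemma tensor_apply_diff:
  "tensor_apply p (\<lambda>xs. A xs - B xs) s = (\<lambda>ys. tensor_apply p A s ys - tensor_apply p B s ys)"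
  unfolding tensor_apply_def by (auto simp: right_diff_distrib sum_subtractf)

lemma tensor_eval_diff:
  "tensor_eval p (\<lambda>xs. A xs - B xs) u = tensor_eval p A u - tensor_eval p B u"
  unfolding tensor_eval_def by (simp add: left_diff_distrib sum_subtractf)

lemma tensor_eval_sum:
  "tensor_eval p (\<lambda>xs. \<Sum>i\<in>I. c i * A i xs) u = (\<Sum>i\<in>I. c i * tensor_eval p (A i) u)"
proof -
  let ?m = "\<lambda>xs. \<Prod>k<p. u k $ (xs ! k)"
  have "tensor_eval p (\<lambda>xs. \<Sum>i\<in>I. c i * A i xs) u = (\<Sum>xs\<in>idx p. \<Sum>i\<in>I. c i * (A i xs * ?m xs))"
    unfolding tensor_eval_def by (simp add: sum_distrib_right mult.assoc)
  also have "\<dots> = (\<Sum>i\<in>I. \<Sum>xs\<in>idx p. c i * (A i xs * ?m xs))"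
    by (rule sum.swap)
  finally show ?thesis unfolding tensor_eval_def by (simp add: sum_distrib_left)
qed

lemma sum_tensor_apply:
  "(\<Sum>i\<in>UNIV. c i * tensor_apply p T (v i) xs) = tensor_apply p T (\<Sum>i\<in>UNIV. c i *\<^sub>R v i) xs"
  unfolding tensor_apply_def
  by (auto simp: sum_component sum_distrib_left sum_distrib_right mult.assoc intro: sum.swap)

lemma tensor_apply_zero: "tensor_apply p T 0 = (\<lambda>_. 0)"
  unfolding tensor_apply_def by (simp only: zero_index mult_zero_left sum.neutral_const if_cancel)

lemma tensor_eval_cong:
  "(\<And>k. k < p \<Longrightarrow> u k = v k) \<Longrightarrow> tensor_eval p T u = tensor_eval p T v"
  unfolding tensor_eval_def by (intro sum.cong refl arg_cong2[where f="(*)"] prod.cong) auto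

lemma tensor_eval_Suc:
  "tensor_eval (Suc m) T u = tensor_eval m (tensor_apply (Suc m) T (u 0)) (u \<circ> Suc)"
proof -
  have "tensor_eval (Suc m) T u
      = (\<Sum>a\<in>UNIV. \<Sum>ys\<in>idx m. T (a # ys) * (u 0 $ a * (\<Prod>k<m. u (Suc k) $ (ys ! k))))"
    unfolding tensor_eval_def sum_idx_Suc prod.lessThan_Suc_shift by simp
  also have "\<dots> = (\<Sum>ys\<in>idx m. \<Sum>a\<in>UNIV. u 0 $ a * T (a # ys) * (\<Prod>k<m. u (Suc k) $ (ys ! k)))"
    by (subst sum.swap) (simp add: algebra_simps)
  also have "\<dots> = tensor_eval m (tensor_apply (Suc m) T (u 0)) (u \<circ> Suc)"
    unfolding tensor_eval_def tensor_apply_def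
    by (intro sum.cong refl) (auto simp: idx_def sum_distrib_right)
  finally show ?thesis .
qed

lemma tensor_eval_axis:
  assumes "length xs = p"
  shows "tensor_eval p T (\<lambda>k. axis (xs ! k) 1) = T xs"
proof -
  have "(\<Prod>k<p. axis (xs ! k) 1 $ (ys ! k)) = (if ys = xs then 1 else (0::real))"
    if "ys \<in> idx p" for ys
  proof (cases "ys = xs")
    case False
    moreover have "length ys = p" using that by (simp add: idx_def)
    ultimately obtain k where "k < p" "ys ! k \<noteq> xs ! k" using assms
      by (metis list_eq_iff_nth_eq)
    thus ?thesis using False by (auto simp: axis_def intro!: prod_zero bexI[of _ k])
  qed (simp add: axis_def)
  hence "tensor_eval p T (\<lambda>k. axis (xs ! k) 1) = (\<Sum>ys\<in>idx p. if ys = xs then T ys else 0)"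
    unfolding tensor_eval_def by (intro sum.cong) auto
  also have "\<dots> = T xs" using finite_idx[of p] assms by (subst sum.delta) (auto simp: idx_def)
  finally show ?thesis .
qed

lemma tensor_eval_fun_upd:
  assumes "k < p"
  shows "tensor_eval p T (u(k := v))
       = (\<Sum>xs\<in>idx p. T xs * (v $ (xs ! k) * (\<Prod>j\<in>{..<p}-{k}. u j $ (xs ! j))))"
  unfolding tensor_eval_def
proof (intro sum.cong refl arg_cong2[where f="(*)"])
  fix xs :: "'a list"
  have "(\<Prod>j<p. (u(k := v)) j $ (xs ! j))
      = (u(k := v)) k $ (xs ! k) * (\<Prod>j\<in>{..<p}-{k}. (u(k := v)) j $ (xs ! j))"
    using assms by (intro prod.remove) auto
  also have "(\<Prod>j\<in>{..<p}-{k}. (u(k := v)) j $ (xs ! j)) = (\<Prod>j\<in>{..<p}-{k}. u j $ (xs ! j))"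
    by (intro prod.cong) auto
  finally show "(\<Prod>j<p. (u(k := v)) j $ (xs ! j)) = v $ (xs ! k) * (\<Prod>j\<in>{..<p}-{k}. u j $ (xs ! j))"
    by simp
qed

lemma tensor_eval_fun_upd_linear:
  assumes "k < p"
  shows "tensor_eval p T (u(k := x + c *\<^sub>R y))
       = tensor_eval p T (u(k := x)) + c * tensor_eval p T (u(k := y))"
  unfolding tensor_eval_fun_upd[OF assms]
  by (simp add: sum.distrib sum_distrib_left algebra_simps)

lemma tensor_eval_permute:
  fixes T :: "('n::finite) tensor"
  assumes "sym_tensor p T" "\<sigma> permutes {..<p}"
  shows "tensor_eval p T (u \<circ> \<sigma>) = tensor_eval p T u"
  unfolding tensor_eval_def
proof (rule sum.reindex_bij_witness[of _ "permute_list \<sigma>" "permute_list (inv \<sigma>)"])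
  fix a :: "'n list" assume "a \<in> idx p"
  hence l: "length a = p" by (simp add: idx_def)
  have inv\<sigma>: "inv \<sigma> permutes {..<length a}" using permutes_inv[OF assms(2)] l by simp
  have \<sigma>: "\<sigma> permutes {..<length a}" using assms(2) l by simp
  show "permute_list \<sigma> (permute_list (inv \<sigma>) a) = a"
    using permute_list_compose[OF \<sigma>, of "inv \<sigma>"] permutes_inv_o(2)[OF assms(2)] by simp
  show "permute_list (inv \<sigma>) (permute_list \<sigma> a) = a"
    using permute_list_compose[OF inv\<sigma>, of \<sigma>] permutes_inv_o(1)[OF assms(2)] by simp
  show "permute_list (inv \<sigma>) a \<in> idx p" "permute_list \<sigma> a \<in> idx p" using l by (simp_all add: idx_def)
  have "T (permute_list (inv \<sigma>) a) = T a"
    using assms(1) l mset_permute_list[OF inv\<sigma>] unfolding sym_tensor_def by (metis length_permute_list)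
  moreover have "(\<Prod>k<p. u k $ (permute_list (inv \<sigma>) a ! k)) = (\<Prod>k<p. u k $ (a ! inv \<sigma> k))"
    using inv\<sigma> l by (intro prod.cong refl) (simp add: permute_list_nth)
  moreover have "\<dots> = (\<Prod>k<p. (u \<circ> \<sigma>) k $ (a ! k))"
    using prod.permute[OF assms(2), of "\<lambda>k. u k $ (a ! inv \<sigma> k)"]
      permutes_inverses(2)[OF assms(2)] by simp
  ultimately show "T (permute_list (inv \<sigma>) a) * (\<Prod>k<p. u k $ (permute_list (inv \<sigma>) a ! k))
                 = T a * (\<Prod>k<p. (u \<circ> \<sigma>) k $ (a ! k))"
    by simp
qed

lemma tensor_eval_eq_0_if_slot:
  assumes "sym_tensor p T" "tensor_apply p T s = (\<lambda>_. 0)" "k < p" "u k = s"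
  shows "tensor_eval p T u = 0"
proof -
  obtain m where m: "p = Suc m" using assms(3) by (cases p) auto
  have "Transposition.transpose 0 k permutes {..<p}" using assms(3) by (intro permutes_swap_id) auto
  hence "tensor_eval p T u = tensor_eval p T (u \<circ> Transposition.transpose 0 k)"
    using tensor_eval_permute assms(1) by metis
  also have "\<dots> = 0" unfolding m tensor_eval_Suc using assms(2,4) m
    by (simp add: tensor_eval_def)
  finally show ?thesis .
qed

definition orth_proj :: "real^'n \<Rightarrow> real^'n \<Rightarrow> real^'n" where
  "orth_proj s x = x - ((s \<bullet> x) / (s \<bullet> s)) *\<^sub>R s"

lemma orth_proj_self: "orth_proj s s = 0"
  by (cases "s = 0") (simp_all add: orth_proj_def)

lemma inner_orth_proj: "s \<bullet> orth_proj s x = 0"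
  by (simp add: orth_proj_def inner_diff_right)

lemma orth_proj_id: "s \<bullet> x = 0 \<Longrightarrow> orth_proj s x = x"
  by (simp add: orth_proj_def)

lemma orth_proj_axis:
  "orth_proj s (axis a 1) $ b = (if b = a then 1 else 0) - s $ a * s $ b / (s \<bullet> s)"
proof -
  have "s \<bullet> axis a 1 = s $ a" by (simp add: cart_eq_inner_axis)
  hence "orth_proj s (axis a 1) $ b = axis a 1 $ b - s $ a / (s \<bullet> s) * s $ b"
    by (simp add: orth_proj_def)
  thus ?thesis by (simp add: axis_def)
qed

lemma orth_proj_axis_commute: "orth_proj s (axis a 1) $ b = orth_proj s (axis b 1) $ a"
  by (simp add: orth_proj_axis)

lemma sum_orth_proj_axis: "(\<Sum>a\<in>UNIV. orth_proj s (axis a 1) $ b * c $ a) = orth_proj s c $ b"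
proof -
  have "(\<Sum>a\<in>UNIV. orth_proj s (axis a 1) $ b * c $ a)
      = (\<Sum>a\<in>UNIV. (if a = b then c $ a else 0) - c $ a * s $ a * s $ b / (s \<bullet> s))"
    by (intro sum.cong refl) (auto simp: orth_proj_axis algebra_simps)
  also have "\<dots> = c $ b - (\<Sum>a\<in>UNIV. c $ a * s $ a) * s $ b / (s \<bullet> s)"
    by (simp add: sum_subtractf sum_divide_distrib sum_distrib_right)
  also have "\<dots> = orth_proj s c $ b"
    by (simp add: orth_proj_def inner_vec_def mult.commute)
  finally show ?thesis .
qed

lemma sum_scaleR_orth_proj_axis: "(\<Sum>i\<in>UNIV. c $ i *\<^sub>R orth_proj s (axis i 1)) = orth_proj s c"
  unfolding vec_eq_iff
proof
  fix b
  have "(\<Sum>i\<in>UNIV. c $ i *\<^sub>R orth_proj s (axis i 1)) $ b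
      = (\<Sum>i\<in>UNIV. orth_proj s (axis i 1) $ b * c $ i)"
    by (simp add: sum_component mult.commute)
  also have "\<dots> = orth_proj s c $ b" by (rule sum_orth_proj_axis)
  finally show "(\<Sum>i\<in>UNIV. c $ i *\<^sub>R orth_proj s (axis i 1)) $ b = orth_proj s c $ b" .
qed

lemma tensor_eval_orth_proj:
  assumes "sym_tensor p D" "tensor_apply p D s = (\<lambda>_. 0)"
  shows "tensor_eval p D (\<lambda>k. orth_proj s (u k)) = tensor_eval p D u"
proof -
  define w where "w m = (\<lambda>j. if j < m then orth_proj s (u j) else u j)" for m
  have "tensor_eval p D (w m) = tensor_eval p D u" if "m \<le> p" for m
    using that
  proof (induction m)
    case (Suc m)
    hence m: "m < p" by simp
    have "w m = (w m)(m := orth_proj s (u m) + ((s \<bullet> u m) / (s \<bullet> s)) *\<^sub>R s)"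
      by (auto simp: w_def orth_proj_def)
    moreover have "w (Suc m) = (w m)(m := orth_proj s (u m))" by (auto simp: w_def)
    moreover have "tensor_eval p D ((w m)(m := s)) = 0"
      by (rule tensor_eval_eq_0_if_slot[OF assms m]) simp
    ultimately have "tensor_eval p D (w m) = tensor_eval p D (w (Suc m))"
      by (metis tensor_eval_fun_upd_linear[OF m] mult_zero_right add_0_right)
    thus ?case using Suc by simp
  qed (simp add: w_def)
  moreover have "tensor_eval p D (w p) = tensor_eval p D (\<lambda>k. orth_proj s (u k))"
    by (rule tensor_eval_cong) (simp add: w_def)
  ultimately show ?thesis by simp
qed

definition tensor_compress :: "nat \<Rightarrow> real^'n \<Rightarrow> ('n::finite) tensor \<Rightarrow> 'n tensor" where
  "tensor_compress p s T xs =
     (if length xs = p then tensor_eval p T (\<lambda>k. orth_proj s (axis (xs ! k) 1)) else 0)"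

lemma tensor_eval_compress:
  "tensor_eval p (tensor_compress p s T) u = tensor_eval p T (\<lambda>k. orth_proj s (u k))"
proof -
  have "tensor_eval p (tensor_compress p s T) u
     = (\<Sum>xs\<in>idx p. \<Sum>ys\<in>idx p. T ys * (\<Prod>k<p. orth_proj s (axis (xs ! k) 1) $ (ys ! k) * u k $ (xs ! k)))"
    unfolding tensor_eval_def tensor_compress_def
    by (intro sum.cong refl) (auto simp: idx_def sum_distrib_right prod.distrib mult.assoc)
  also have "\<dots> = (\<Sum>ys\<in>idx p. T ys *
      (\<Sum>xs\<in>idx p. \<Prod>k<p. orth_proj s (axis (xs ! k) 1) $ (ys ! k) * u k $ (xs ! k)))"
    by (subst sum.swap) (simp add: sum_distrib_left)
  also have "\<dots> = (\<Sum>ys\<in>idx p. T ys *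
      (\<Prod>k<p. \<Sum>a\<in>UNIV. orth_proj s (axis a 1) $ (ys ! k) * u k $ a))"
    by (subst sum_idx_prod[symmetric]) simp
  also have "\<dots> = tensor_eval p T (\<lambda>k. orth_proj s (u k))"
    unfolding tensor_eval_def by (simp add: sum_orth_proj_axis)
  finally show ?thesis .
qed

lemma sym_tensor_compress:
  assumes "sym_tensor p T"
  shows "sym_tensor p (tensor_compress p s T)"
  unfolding sym_tensor_def is_tensor_def
proof (intro conjI allI impI)
  fix xs :: "'a list" assume "length xs \<noteq> p"
  thus "tensor_compress p s T xs = 0" by (simp add: tensor_compress_def)
next
  fix xs ys :: "'a list" assume l: "length xs = p" and m: "mset xs = mset ys"
  have ly: "length ys = p" using l m by (metis size_mset)
  obtain \<sigma> where \<sigma>: "\<sigma> permutes {..<length ys}" "permute_list \<sigma> ys = xs"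
    using mset_eq_permutation[OF m] by blast
  have "tensor_eval p T (\<lambda>k. orth_proj s (axis (xs ! k) 1))
      = tensor_eval p T ((\<lambda>k. orth_proj s (axis (ys ! k) 1)) \<circ> \<sigma>)"
    by (rule tensor_eval_cong) (use \<sigma> ly in \<open>auto simp: permute_list_nth\<close>)
  also have "\<dots> = tensor_eval p T (\<lambda>k. orth_proj s (axis (ys ! k) 1))"
    using tensor_eval_permute assms \<sigma>(1) ly by metis
  finally show "tensor_compress p s T xs = tensor_compress p s T ys"
    using l ly by (simp add: tensor_compress_def)
qed

lemma tensor_apply_compress:
  assumes "p \<ge> 1"
  shows "tensor_apply p (tensor_compress p s T) s = (\<lambda>_. 0)"
proof
  fix ys :: "'a list"
  obtain m where m: "p = Suc m" using assms by (cases p) auto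
  let ?v = "\<lambda>k. orth_proj s (axis (ys ! k) 1)"
  have "(\<Sum>i\<in>UNIV. s $ i * tensor_compress p s T (i # ys)) = 0" if "length ys = m"
  proof -
    have "(\<Sum>i\<in>UNIV. s $ i * tensor_compress p s T (i # ys))
        = (\<Sum>i\<in>UNIV. s $ i * tensor_eval m (tensor_apply p T (orth_proj s (axis i 1))) ?v)"
      using that unfolding tensor_compress_def m tensor_eval_Suc by (simp add: o_def)
    also have "\<dots> = tensor_eval m (tensor_apply p T (orth_proj s s)) ?v"
      unfolding tensor_eval_sum[symmetric] sum_tensor_apply sum_scaleR_orth_proj_axis ..
    also have "\<dots> = 0"
      by (simp add: orth_proj_self tensor_apply_zero tensor_eval_def)
    finally show ?thesis .
  qed
  thus "tensor_apply p (tensor_compress p s T) s ys = 0"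
    by (simp add: tensor_apply_def m)
qed

definition tensor_inner :: "nat \<Rightarrow> 'n tensor \<Rightarrow> 'n tensor \<Rightarrow> real" where
  "tensor_inner p A B = (\<Sum>xs\<in>idx p. A xs * B xs)"

lemma tensor_inner_compress:
  "tensor_inner p A (tensor_compress p s B) = tensor_inner p (tensor_compress p s A) B"
proof -
  let ?c = "\<lambda>xs ys. \<Prod>k<p. orth_proj s (axis (xs ! k) 1) $ (ys ! k)"
  have c: "?c xs ys = ?c ys xs" for xs ys
    by (intro prod.cong refl) (rule orth_proj_axis_commute)
  have "tensor_inner p A (tensor_compress p s B) = (\<Sum>xs\<in>idx p. \<Sum>ys\<in>idx p. A xs * (B ys * ?c xs ys))"
    unfolding tensor_inner_def tensor_compress_def tensor_eval_def
    by (intro sum.cong refl) (auto simp: idx_def sum_distrib_left)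
  also have "\<dots> = (\<Sum>ys\<in>idx p. \<Sum>xs\<in>idx p. (A xs * ?c ys xs) * B ys)"
    by (subst sum.swap) (simp add: c mult_ac)
  also have "\<dots> = tensor_inner p (tensor_compress p s A) B"
    unfolding tensor_inner_def tensor_compress_def tensor_eval_def
    by (intro sum.cong refl) (auto simp: idx_def sum_distrib_right)
  finally show ?thesis .
qed

lemma tensor_compress_eq_self:
  fixes D :: "('n::finite) tensor"
  assumes "sym_tensor p D" "tensor_apply p D s = (\<lambda>_. 0)"
  shows "tensor_compress p s D = D"
proof (rule tensor_eqI)
  show "is_tensor p (tensor_compress p s D)" "is_tensor p D"
    using sym_tensor_compress assms(1) by (auto simp: sym_tensor_def)
  fix xs :: "'n list" assume "xs \<in> idx p"
  thus "tensor_compress p s D xs = D xs"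
    using tensor_eval_axis tensor_eval_orth_proj[OF assms] by (simp add: idx_def tensor_compress_def)
qed

definition vanishes_on_perp :: "nat \<Rightarrow> real^'n \<Rightarrow> ('n::finite) tensor \<Rightarrow> bool" where
  "vanishes_on_perp p s T \<longleftrightarrow> (\<forall>u. (\<forall>k<p. s \<bullet> u k = 0) \<longrightarrow> tensor_eval p T u = 0)"

lemma tensor_compress_eq_0:
  assumes "vanishes_on_perp p s U"
  shows "tensor_compress p s U = (\<lambda>_. 0)"
  using assms inner_orth_proj[of s] by (auto simp: vanishes_on_perp_def tensor_compress_def)

lemma vanishes_on_perp_diff_compress: "vanishes_on_perp p s (\<lambda>xs. T xs - tensor_compress p s T xs)"
  unfolding vanishes_on_perp_def tensor_eval_diff tensor_eval_compress
  by (auto intro: tensor_eval_cong simp: orth_proj_id)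

lemma tensor_inner_eq_0_if_vanishes_on_perp:
  assumes "sym_tensor p D" "tensor_apply p D s = (\<lambda>_. 0)" "vanishes_on_perp p s U"
  shows "tensor_inner p U D = 0"
proof -
  have "tensor_inner p U D = tensor_inner p U (tensor_compress p s D)"
    by (simp only: tensor_compress_eq_self[OF assms(1,2)])
  also have "\<dots> = tensor_inner p (tensor_compress p s U) D" by (rule tensor_inner_compress)
  also have "\<dots> = 0" by (simp add: tensor_compress_eq_0[OF assms(3)] tensor_inner_def)
  finally show ?thesis .
qed

lemma sym_tensor_eq_0_if_vanishes_on_perp:
  assumes "sym_tensor p D" "tensor_apply p D s = (\<lambda>_. 0)" "vanishes_on_perp p s D"
  shows "D = (\<lambda>_. 0)"
  using tensor_compress_eq_self[OF assms(1,2)] tensor_compress_eq_0[OF assms(3)] by simp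

text \<open>Entries of a solution of \<open>U[s] = R\<close>, indexed by multisets and computed by recursion on
the multiplicity \<open>k\<close> of a fixed index \<open>i\<^sub>0\<close> with \<open>s\<^sub>i\<^sub>0 \<noteq> 0\<close>: the equation at \<open>N - {i\<^sub>0}\<close> is
solved for its \<open>i\<^sub>0\<close>-term, all other terms having multiplicity \<open>k - 1\<close>.\<close>

primrec preimage_entry ::
  "nat \<Rightarrow> real^'n \<Rightarrow> 'n \<Rightarrow> ('n multiset \<Rightarrow> real) \<Rightarrow> 'n multiset \<Rightarrow> real" where
  "preimage_entry 0 s i0 r N = 0"
| "preimage_entry (Suc k) s i0 r N =
     (r (N - {#i0#}) - (\<Sum>i\<in>UNIV-{i0}. s $ i * preimage_entry k s i0 r (add_mset i (N - {#i0#}))))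
     / s $ i0"

lemma exists_sym_tensor_apply_eq:
  fixes s :: "real^'n::finite" and R :: "'n tensor"
  assumes "p \<ge> 1" "s \<noteq> 0" "sym_tensor (p - 1) R"
  obtains U where "sym_tensor p U" "tensor_apply p U s = R"
proof -
  obtain i0 where i0: "s $ i0 \<noteq> 0" using assms(2) by (metis vec_eq_iff zero_index)
  define r where "r M = R (SOME xs. mset xs = M)" for M
  define UM where "UM N = preimage_entry (count N i0) s i0 r N" for N
  define U where "U xs = (if length xs = p then UM (mset xs) else 0)" for xs
  have "sym_tensor p U" unfolding sym_tensor_def is_tensor_def U_def
    by (auto dest: mset_eq_length)
  moreover have "tensor_apply p U s ys = R ys" for ys
  proof (cases "length ys = p - 1")
    case False
    thus ?thesis using assms(3) by (simp add: tensor_apply_def sym_tensor_def is_tensor_def)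
  next
    case True
    define M where "M = mset ys"
    define S where "S = (\<Sum>i\<in>UNIV-{i0}. s $ i * preimage_entry (count M i0) s i0 r (add_mset i M))"
    have "tensor_apply p U s ys = (\<Sum>i\<in>UNIV. s $ i * UM (add_mset i M))"
      using True assms(1) by (simp add: tensor_apply_def U_def M_def)
    also have "\<dots> = s $ i0 * UM (add_mset i0 M) + (\<Sum>i\<in>UNIV-{i0}. s $ i * UM (add_mset i M))"
      by (simp add: sum.remove)
    also have "(\<Sum>i\<in>UNIV-{i0}. s $ i * UM (add_mset i M)) = S"
      unfolding S_def UM_def by (intro sum.cong refl) auto
    also have "UM (add_mset i0 M) = (r M - S) / s $ i0"
      unfolding UM_def S_def by simp
    also have "s $ i0 * ((r M - S) / s $ i0) + S = r M" using i0 by simp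
    also have "r M = R ys"
    proof -
      have "mset (SOME xs. mset xs = M) = mset ys"
        using someI_ex[of "\<lambda>xs. mset xs = M"] M_def by blast
      thus ?thesis using assms(3) True unfolding r_def sym_tensor_def by (metis mset_eq_length)
    qed
    finally show ?thesis .
  qed
  ultimately show ?thesis using that by blast
qed

lemma exists_solution_vanishing_on_perp:
  fixes s :: "real^'n::finite" and R :: "'n tensor"
  assumes "p \<ge> 1" "s \<noteq> 0" "sym_tensor (p - 1) R"
  obtains U where "sym_tensor p U" "tensor_apply p U s = R" "vanishes_on_perp p s U"
proof -
  obtain U0 where U0: "sym_tensor p U0" "tensor_apply p U0 s = R"
    using exists_sym_tensor_apply_eq[OF assms] by blast
  let ?U = "\<lambda>xs. U0 xs - tensor_compress p s U0 xs"
  have "sym_tensor p ?U" by (intro sym_tensor_diff U0(1) sym_tensor_compress)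
  moreover have "tensor_apply p ?U s = R"
    unfolding tensor_apply_diff U0(2) tensor_apply_compress[OF assms(1)] by simp
  ultimately show ?thesis using that vanishes_on_perp_diff_compress by blast
qed

lemma frob_norm_sq: "(frob_norm p T)\<^sup>2 = (\<Sum>xs\<in>idx p. (T xs)\<^sup>2)"
  by (simp add: frob_norm_def sum_nonneg)

lemma frob_norm_eq_0_iff:
  fixes T :: "('n::finite) tensor"
  assumes "is_tensor p T"
  shows "frob_norm p T = 0 \<longleftrightarrow> T = (\<lambda>_. 0)"
proof
  assume "frob_norm p T = 0"
  hence "(\<Sum>xs\<in>idx p. (T xs)\<^sup>2) = 0" using frob_norm_sq[of p T] by simp
  hence "\<forall>xs\<in>idx p. T xs = 0"
    using sum_nonneg_eq_0_iff[OF finite_idx[of p], of "\<lambda>xs. (T xs)\<^sup>2"] by simp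
  thus "T = (\<lambda>_. 0)" using assms by (intro tensor_eqI) (auto simp: is_tensor_def)
qed (simp add: frob_norm_def)

lemma frob_norm_pythagoras:
  assumes "tensor_inner p U (\<lambda>xs. V xs - U xs) = 0"
  shows "(frob_norm p V)\<^sup>2 = (frob_norm p U)\<^sup>2 + (frob_norm p (\<lambda>xs. V xs - U xs))\<^sup>2"
proof -
  have "(\<Sum>xs\<in>idx p. (V xs)\<^sup>2)
      = (\<Sum>xs\<in>idx p. (U xs)\<^sup>2 + 2 * (U xs * (V xs - U xs)) + (V xs - U xs)\<^sup>2)"
    by (intro sum.cong refl) (simp add: power2_eq_square algebra_simps)
  thus ?thesis
    using assms unfolding frob_norm_sq tensor_inner_def
    by (simp add: sum.distrib sum_distrib_left[symmetric])
qed

lemma frob_norm_sq_solution: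
  assumes "sym_tensor p U" "sym_tensor p V" "tensor_apply p V s = tensor_apply p U s"
    "vanishes_on_perp p s U"
  shows "(frob_norm p V)\<^sup>2 = (frob_norm p U)\<^sup>2 + (frob_norm p (\<lambda>xs. V xs - U xs))\<^sup>2"
proof (rule frob_norm_pythagoras, rule tensor_inner_eq_0_if_vanishes_on_perp)
  show "sym_tensor p (\<lambda>xs. V xs - U xs)" by (rule sym_tensor_diff[OF assms(2,1)])
  show "tensor_apply p (\<lambda>xs. V xs - U xs) s = (\<lambda>_. 0)"
    unfolding tensor_apply_diff assms(3) by simp
qed (rule assms(4))

lemma frob_norm_le_solution:
  assumes "sym_tensor p U" "sym_tensor p V" "tensor_apply p V s = tensor_apply p U s"
    "vanishes_on_perp p s U"
  shows "frob_norm p U \<le> frob_norm p V"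
  using frob_norm_sq_solution[OF assms]
  by (simp add: frob_norm_def real_le_rsqrt sum_nonneg)

lemma solution_eq_if_frob_norm_le:
  fixes U V :: "('n::finite) tensor"
  assumes "sym_tensor p U" "sym_tensor p V" "tensor_apply p V s = tensor_apply p U s"
    "vanishes_on_perp p s U" "frob_norm p V \<le> frob_norm p U"
  shows "V = U"
proof -
  have "frob_norm p (\<lambda>xs. V xs - U xs) = 0"
    using frob_norm_sq_solution[OF assms(1-4)] frob_norm_le_solution[OF assms(1-4)] assms(5)
    by simp
  moreover have "is_tensor p (\<lambda>xs. V xs - U xs)"
    using sym_tensor_diff[OF assms(2,1)] by (simp add: sym_tensor_def)
  ultimately show ?thesis by (simp add: frob_norm_eq_0_iff fun_eq_iff)
qed

lemma solution_vanishing_on_perp_unique: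
  assumes "sym_tensor p U" "sym_tensor p V" "tensor_apply p V s = tensor_apply p U s"
    "vanishes_on_perp p s U" "vanishes_on_perp p s V"
  shows "V = U"
proof -
  have "(\<lambda>xs. V xs - U xs) = (\<lambda>_. 0)"
  proof (rule sym_tensor_eq_0_if_vanishes_on_perp)
    show "sym_tensor p (\<lambda>xs. V xs - U xs)" by (rule sym_tensor_diff[OF assms(2,1)])
    show "tensor_apply p (\<lambda>xs. V xs - U xs) s = (\<lambda>_. 0)"
      unfolding tensor_apply_diff assms(3) by simp
    show "vanishes_on_perp p s (\<lambda>xs. V xs - U xs)"
      using assms(4,5) by (simp add: vanishes_on_perp_def tensor_eval_diff)
  qed
  thus ?thesis by (simp add: fun_eq_iff)
qed

theorem mainTheorem2:
  fixes s :: "real^'n" and R :: "'n tensor" and p :: nat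
  assumes "p \<ge> 2" and "s \<noteq> 0" and "sym_tensor (p - 1) R"
  shows "\<exists>U. (sym_tensor p U \<and> tensor_apply p U s = R \<and>
              (\<forall>V. sym_tensor p V \<and> tensor_apply p V s = R \<longrightarrow> frob_norm p U \<le> frob_norm p V))
          \<and> (\<forall>W. (sym_tensor p W \<and> tensor_apply p W s = R \<and>
              (\<forall>V. sym_tensor p V \<and> tensor_apply p V s = R \<longrightarrow> frob_norm p W \<le> frob_norm p V))
              \<longrightarrow> W = U)
          \<and> (sym_tensor p U \<and> tensor_apply p U s = R \<and>
              (\<forall>u. (\<forall>k<p. s \<bullet> u k = 0) \<longrightarrow> tensor_eval p U u = 0))
          \<and> (\<forall>W. (sym_tensor p W \<and> tensor_apply p W s = R \<and>
              (\<forall>u. (\<forall>k<p. s \<bullet> u k = 0) \<longrightarrow> tensor_eval p W u = 0)) \<longrightarrow> W = U)"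
proof -
  obtain U where U: "sym_tensor p U" "tensor_apply p U s = R" "vanishes_on_perp p s U"
    using exists_solution_vanishing_on_perp assms by (metis one_le_numeral order_trans)
  have "frob_norm p U \<le> frob_norm p V" if "sym_tensor p V" "tensor_apply p V s = R" for V
    using frob_norm_le_solution[OF U(1) that(1) _ U(3)] that U(2) by simp
  moreover have "W = U" if "sym_tensor p W" "tensor_apply p W s = R" "frob_norm p W \<le> frob_norm p U"
    for W
    using solution_eq_if_frob_norm_le[OF U(1) that(1) _ U(3) that(3)] that(2) U(2) by simp
  moreover have "W = U" if "sym_tensor p W" "tensor_apply p W s = R" "vanishes_on_perp p s W" for W
    using solution_vanishing_on_perp_unique[OF U(1) that(1) _ U(3) that(3)] that(2) U(2) by simp
  ultimately show ?thesis
    using U unfolding vanishes_on_perp_def by blast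
qed

end
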